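(* Let $1\le\nu<\infty$, let $\phi(z)=az+b$ with $0<|a|<1$, $b\in\mathbb{C}$, and let $w(z)=e^{p+qz}$ with $p,q\in\mathbb{C}$. Then: if $\operatorname{Re}p+\operatorname{Re}\left(\frac{qb}{1-a}\right)>0$, the operator $W_{w,\phi}$ is not power-bounded on $\mathcal{F}^\nu$; if $\operatorname{Re}p+\operatorname{Re}\left(\frac{qb}{1-a}\right)-\ln|a|<0$, the operator $W_{w,\phi}$ is power-bounded on $\mathcal{F}^\nu$.
   Context: For $1\le\nu<\infty$, $\mathcal{F}^\nu$ is the space of entire functions $f$ with $\|f\|_\nu:=\left(\frac{\nu}{2\pi}\int_{\mathbb{C}}|f(z)|^\nu e^{-\nu|z|^2/2}\,dm(z)\right)^{1/\nu}<\infty$. $W_{w,\phi}f=w\,(f\circ\phi)$. An operator $T$ is power-bounded if $\sup_{n\ge1}\|T^n\|<\infty$. *)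

theory Defs
  imports "HOL-Analysis.Analysis"
begin

definition fock_weight :: "real \<Rightarrow> (complex \<Rightarrow> complex) \<Rightarrow> complex \<Rightarrow> real" where
  "fock_weight \<nu> f z = cmod (f z) powr \<nu> * exp (- \<nu> * (cmod z)\<^sup>2 / 2)"

definition in_fock :: "real \<Rightarrow> (complex \<Rightarrow> complex) \<Rightarrow> bool" where
  "in_fock \<nu> f \<longleftrightarrow> f holomorphic_on UNIV \<and> integrable lborel (fock_weight \<nu> f)"

definition fock_norm :: "real \<Rightarrow> (complex \<Rightarrow> complex) \<Rightarrow> real" where
  "fock_norm \<nu> f = (\<nu> / (2 * pi) * (\<integral>z. fock_weight \<nu> f z \<partial>lborel)) powr (1 / \<nu>)"

definition wcomp :: "(complex \<Rightarrow> complex) \<Rightarrow> (complex \<Rightarrow> complex) \<Rightarrow> (complex \<Rightarrow> complex) \<Rightarrow> (complex \<Rightarrow> complex)" where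
  "wcomp w \<phi> f = (\<lambda>z. w z * f (\<phi> z))"

definition power_bounded :: "real \<Rightarrow> ((complex \<Rightarrow> complex) \<Rightarrow> (complex \<Rightarrow> complex)) \<Rightarrow> bool" where
  "power_bounded \<nu> T \<longleftrightarrow> (\<exists>C. \<forall>n\<ge>1. \<forall>f. in_fock \<nu> f \<longrightarrow>
      in_fock \<nu> ((T ^^ n) f) \<and> fock_norm \<nu> ((T ^^ n) f) \<le> C * fock_norm \<nu> f)"

end

(* Write phi z = a z + b, z0 = b / (1 - a) for its fixed point and lambda = exp (p + q z0).
   The function exp (q z / (1 - a)) is an eigenfunction of W with eigenvalue lambda, so W is not
   power-bounded when |lambda| > 1.  Conversely, the iterates have the closed form
     (W^n f) z = lambda^n * exp (q (z - z0) (1 + a + ... + a^(n-1))) * f (z0 + a^n (z - z0)),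
   and the pointwise estimate |f w| <= exp (|w|^2 / 2) * ||f|| (the sub-mean-value property of |f|^nu,
   averaged against the rotation invariant Gaussian) bounds the Fock integrand of W^n f by ||f||^nu
   times one Gaussian exp (A |z| + C - nu (1 - |a|^2) |z|^2 / 2), uniformly in n >= 1, as soon as
   |lambda| <= 1.  So the second half of the theorem holds already when Re p + Re (q b / (1 - a)) <= 0. *)

theory Submission
  imports Defs "HOL-Complex_Analysis.Complex_Analysis" "HOL-Probability.Distributions"
begin

section \<open>Lebesgue measure on the complex plane\<close>

lemma borel_measurable_Complex [measurable]:
  fixes f g :: "'a \<Rightarrow> real"
  assumes [measurable]: "f \<in> borel_measurable M" "g \<in> borel_measurable M"
  shows "(\<lambda>x. Complex (f x) (g x)) \<in> borel_measurable M"
proof -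
  have "(\<lambda>x. Complex (f x) (g x)) = (\<lambda>x. complex_of_real (f x) + \<i> * complex_of_real (g x))"
    by (auto simp: complex_eq_iff)
  then show ?thesis by simp
qed

lemma borel_measurable_Complex_pair [measurable]:
  "(\<lambda>p::real \<times> real. Complex (fst p) (snd p)) \<in> borel_measurable borel"
proof -
  have "(\<lambda>p::real \<times> real. Complex (fst p) (snd p)) = (\<lambda>p. of_real (fst p) + \<i> * of_real (snd p))"
    by (auto simp: complex_eq_iff)
  moreover have "continuous_on UNIV (\<lambda>p::real \<times> real. of_real (fst p) + \<i> * of_real (snd p))"
    by (intro continuous_intros)
  ultimately show ?thesis
    by (metis borel_measurable_continuous_onI)
qed

lemma distr_lborel_Complex:
  "distr lborel borel (\<lambda>p. Complex (fst p) (snd p)) = (lborel :: complex measure)"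
proof (rule lborel_eqI[symmetric])
  fix l u :: complex
  assume lu: "\<And>b. b \<in> Basis \<Longrightarrow> l \<bullet> b \<le> u \<bullet> b"
  have "Re l \<le> Re u" "Im l \<le> Im u"
    using lu[of 1] lu[of \<i>] by (auto simp: Basis_complex_def)
  have "(\<lambda>p. Complex (fst p) (snd p)) -` box l u = box (Re l, Im l) (Re u, Im u)"
    by (auto simp: box_def Basis_complex_def Basis_prod_def inner_prod_def)
  then have "emeasure (distr lborel borel (\<lambda>p. Complex (fst p) (snd p))) (box l u)
      = emeasure lborel (box (Re l, Im l) (Re u, Im u))"
    by (simp add: emeasure_distr)
  also have "\<dots> = ennreal ((Re u - Re l) * (Im u - Im l))"
    using \<open>Re l \<le> Re u\<close> \<open>Im l \<le> Im u\<close>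
    by (subst emeasure_lborel_box) (auto simp: Basis_prod_def inner_prod_def prod.union_disjoint)
  finally show "emeasure (distr lborel borel (\<lambda>p. Complex (fst p) (snd p))) (box l u)
      = (\<Prod>b\<in>Basis. (u - l) \<bullet> b)"
    by (simp add: Basis_complex_def)
qed simp

lemma nn_integral_lborel_complex:
  fixes F :: "complex \<Rightarrow> ennreal"
  assumes [measurable]: "F \<in> borel_measurable borel"
  shows "(\<integral>\<^sup>+z. F z \<partial>lborel) = (\<integral>\<^sup>+x. \<integral>\<^sup>+y. F (Complex x y) \<partial>lborel \<partial>lborel)"
proof -
  have "(\<integral>\<^sup>+z. F z \<partial>lborel) = (\<integral>\<^sup>+p. F (Complex (fst p) (snd p)) \<partial>(lborel \<Otimes>\<^sub>M lborel))"
    by (simp flip: distr_lborel_Complex add: nn_integral_distr lborel_prod)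
  also have "\<dots> = (\<integral>\<^sup>+x. \<integral>\<^sup>+y. F (Complex x y) \<partial>lborel \<partial>lborel)"
    by (simp add: lborel.nn_integral_fst[symmetric])
  finally show ?thesis .
qed

lemma nn_integral_lborel_complex_shear_Re:
  fixes F :: "complex \<Rightarrow> ennreal" and c d :: real
  assumes [measurable]: "F \<in> borel_measurable borel" and "c \<noteq> 0"
  shows "(\<integral>\<^sup>+z. F z \<partial>lborel) = \<bar>c\<bar> * (\<integral>\<^sup>+z. F (Complex (d * Im z + c * Re z) (Im z)) \<partial>lborel)"
proof -
  have sheared: "(\<lambda>z. F (Complex (d * Im z + c * Re z) (Im z))) \<in> borel_measurable borel"
    by measurable
  have "(\<integral>\<^sup>+z. F z \<partial>lborel) = (\<integral>\<^sup>+x. \<integral>\<^sup>+y. F (Complex x y) \<partial>lborel \<partial>lborel)"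
    by (rule nn_integral_lborel_complex) measurable
  also have "\<dots> = (\<integral>\<^sup>+y. \<integral>\<^sup>+x. F (Complex x y) \<partial>lborel \<partial>lborel)"
    by (rule lborel_pair.Fubini') measurable
  also have "\<dots> = (\<integral>\<^sup>+y. \<bar>c\<bar> * \<integral>\<^sup>+x. F (Complex (d * y + c * x) y) \<partial>lborel \<partial>lborel)"
    using \<open>c \<noteq> 0\<close> by (intro nn_integral_cong nn_integral_real_affine) simp_all
  also have "\<dots> = \<bar>c\<bar> * (\<integral>\<^sup>+y. \<integral>\<^sup>+x. F (Complex (d * y + c * x) y) \<partial>lborel \<partial>lborel)"
    by (rule nn_integral_cmult) measurable
  also have "(\<integral>\<^sup>+y. \<integral>\<^sup>+x. F (Complex (d * y + c * x) y) \<partial>lborel \<partial>lborel)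
      = (\<integral>\<^sup>+x. \<integral>\<^sup>+y. F (Complex (d * y + c * x) y) \<partial>lborel \<partial>lborel)"
    by (rule lborel_pair.Fubini') measurable
  also have "\<dots> = (\<integral>\<^sup>+z. F (Complex (d * Im z + c * Re z) (Im z)) \<partial>lborel)"
    using nn_integral_lborel_complex[OF sheared] by simp
  finally show ?thesis .
qed

lemma nn_integral_lborel_complex_shear_Im:
  fixes F :: "complex \<Rightarrow> ennreal" and c d :: real
  assumes [measurable]: "F \<in> borel_measurable borel" and "c \<noteq> 0"
  shows "(\<integral>\<^sup>+z. F z \<partial>lborel) = \<bar>c\<bar> * (\<integral>\<^sup>+z. F (Complex (Re z) (d * Re z + c * Im z)) \<partial>lborel)"
proof -
  have sheared: "(\<lambda>z. F (Complex (Re z) (d * Re z + c * Im z))) \<in> borel_measurable borel"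
    by measurable
  have "(\<integral>\<^sup>+z. F z \<partial>lborel) = (\<integral>\<^sup>+x. \<integral>\<^sup>+y. F (Complex x y) \<partial>lborel \<partial>lborel)"
    by (rule nn_integral_lborel_complex) measurable
  also have "\<dots> = (\<integral>\<^sup>+x. \<bar>c\<bar> * \<integral>\<^sup>+y. F (Complex x (d * x + c * y)) \<partial>lborel \<partial>lborel)"
    using \<open>c \<noteq> 0\<close> by (intro nn_integral_cong nn_integral_real_affine) simp_all
  also have "\<dots> = \<bar>c\<bar> * (\<integral>\<^sup>+x. \<integral>\<^sup>+y. F (Complex x (d * x + c * y)) \<partial>lborel \<partial>lborel)"
    by (rule nn_integral_cmult) measurable
  also have "(\<integral>\<^sup>+x. \<integral>\<^sup>+y. F (Complex x (d * x + c * y)) \<partial>lborel \<partial>lborel)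
      = (\<integral>\<^sup>+z. F (Complex (Re z) (d * Re z + c * Im z)) \<partial>lborel)"
    using nn_integral_lborel_complex[OF sheared] by simp
  finally show ?thesis .
qed

lemma nn_integral_lborel_mult_unit_Re_nonzero:
  fixes F :: "complex \<Rightarrow> ennreal"
  assumes [measurable]: "F \<in> borel_measurable borel" and "cmod u = 1" and "Re u \<noteq> 0"
  shows "(\<integral>\<^sup>+z. F (u * z) \<partial>lborel) = (\<integral>\<^sup>+z. F z \<partial>lborel)"
proof -
  \<comment> \<open>With \<open>u = c + i s\<close>, multiplication by \<open>u\<close> is \<open>(x, y) \<mapsto> (c x - s y, y)\<close> followed by
    \<open>(x, y) \<mapsto> (x, (s x + y) / c)\<close>; the Jacobians \<open>|c|\<close> and \<open>1 / |c|\<close> of these shears cancel.\<close>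
  define c s where "c = Re u" and "s = Im u"
  have "c \<noteq> 0" using \<open>Re u \<noteq> 0\<close> by (simp add: c_def)
  have "c\<^sup>2 + s\<^sup>2 = 1" using \<open>cmod u = 1\<close> by (simp add: c_def s_def cmod_def)
  define H where "H = (\<lambda>z. F (Complex (Re z) ((s * Re z + Im z) / c)))"
  have H_measurable [measurable]: "H \<in> borel_measurable borel" unfolding H_def by measurable
  have "(\<integral>\<^sup>+z. F z \<partial>lborel) = ennreal \<bar>1/c\<bar> * (\<integral>\<^sup>+z. H z \<partial>lborel)"
    using nn_integral_lborel_complex_shear_Im[of F "1/c" "s/c"] \<open>c \<noteq> 0\<close>
    by (simp add: H_def add_divide_distrib)
  also have "(\<integral>\<^sup>+z. H z \<partial>lborel) = ennreal \<bar>c\<bar> * (\<integral>\<^sup>+z. H (Complex (- s * Im z + c * Re z) (Im z)) \<partial>lborel)"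
    using H_measurable \<open>c \<noteq> 0\<close> by (rule nn_integral_lborel_complex_shear_Re)
  also have "(\<lambda>z. H (Complex (- s * Im z + c * Re z) (Im z))) = (\<lambda>z. F (u * z))"
  proof
    fix z
    have "s * (- s * Im z + c * Re z) + Im z = c * (s * Re z + c * Im z) + (1 - c\<^sup>2 - s\<^sup>2) * Im z"
      by (simp add: algebra_simps power2_eq_square)
    also have "1 - c\<^sup>2 - s\<^sup>2 = 0"
      using \<open>c\<^sup>2 + s\<^sup>2 = 1\<close> by simp
    finally have "s * (- s * Im z + c * Re z) + Im z = c * (s * Re z + c * Im z)"
      by simp
    then have "(s * (- s * Im z + c * Re z) + Im z) / c = s * Re z + c * Im z"
      using \<open>c \<noteq> 0\<close> by simp
    then have "Complex (- s * Im z + c * Re z) ((s * (- s * Im z + c * Re z) + Im z) / c) = u * z"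
      by (simp add: complex_eq_iff c_def s_def algebra_simps)
    then show "H (Complex (- s * Im z + c * Re z) (Im z)) = F (u * z)"
      by (simp only: H_def complex.sel)
  qed
  finally have "(\<integral>\<^sup>+z. F z \<partial>lborel) = (ennreal \<bar>1/c\<bar> * ennreal \<bar>c\<bar>) * (\<integral>\<^sup>+z. F (u * z) \<partial>lborel)"
    by (simp add: mult.assoc)
  also have "ennreal \<bar>1/c\<bar> * ennreal \<bar>c\<bar> = 1"
    using \<open>c \<noteq> 0\<close> by (simp add: ennreal_mult[symmetric] abs_mult[symmetric])
  finally show ?thesis by simp
qed

lemma nn_integral_lborel_mult_unit:
  fixes F :: "complex \<Rightarrow> ennreal"
  assumes [measurable]: "F \<in> borel_measurable borel" and "cmod u = 1"
  shows "(\<integral>\<^sup>+z. F (u * z) \<partial>lborel) = (\<integral>\<^sup>+z. F z \<partial>lborel)"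
proof (cases "Re u = 0")
  case False
  with assms show ?thesis by (rule nn_integral_lborel_mult_unit_Re_nonzero)
next
  case True
  define v where "v = cis (pi / 4)"
  have "Im u \<noteq> 0" using True \<open>cmod u = 1\<close> by (auto simp: cmod_def)
  then have "Re (u * v) \<noteq> 0" using True by (simp add: v_def sin_45)
  have "cmod v = 1" by (simp add: v_def)
  have "v * cnj v = 1" using \<open>cmod v = 1\<close> complex_norm_square[of v] by simp
  then have uv: "u * v * (cnj v * z) = u * z" for z
    by (metis mult.assoc mult_1_left)
  have "(\<integral>\<^sup>+z. F (u * z) \<partial>lborel) = (\<integral>\<^sup>+z. (\<lambda>w. F (u * v * w)) (cnj v * z) \<partial>lborel)"
    by (simp only: uv)
  also have "\<dots> = (\<integral>\<^sup>+z. F (u * v * z) \<partial>lborel)"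
    using \<open>cmod v = 1\<close> by (intro nn_integral_lborel_mult_unit_Re_nonzero) (simp_all add: v_def cos_45)
  also have "\<dots> = (\<integral>\<^sup>+z. F z \<partial>lborel)"
    using \<open>cmod u = 1\<close> \<open>cmod v = 1\<close> \<open>Re (u * v) \<noteq> 0\<close>
    by (intro nn_integral_lborel_mult_unit_Re_nonzero) (simp_all add: norm_mult)
  finally show ?thesis .
qed

section \<open>Gaussian integrals\<close>

definition gauss_weight :: "real \<Rightarrow> complex \<Rightarrow> real" where
  "gauss_weight \<nu> z = exp (- \<nu> * (cmod z)\<^sup>2 / 2)"

lemma borel_measurable_gauss_weight [measurable]: "gauss_weight \<nu> \<in> borel_measurable borel"
  unfolding gauss_weight_def by measurable

lemma fock_weight_eq: "fock_weight \<nu> f z = cmod (f z) powr \<nu> * gauss_weight \<nu> z"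
  by (simp add: fock_weight_def gauss_weight_def)

lemma fock_weight_nonneg: "0 \<le> fock_weight \<nu> f z"
  by (simp add: fock_weight_def)

lemma nn_integral_gaussian:
  fixes \<beta> :: real
  assumes "0 < \<beta>"
  shows "(\<integral>\<^sup>+x. ennreal (exp (- \<beta> * x\<^sup>2)) \<partial>lborel) = ennreal (sqrt (pi / \<beta>))"
proof -
  define \<sigma> where "\<sigma> = 1 / sqrt (2 * \<beta>)"
  have \<sigma>: "\<sigma>\<^sup>2 = 1 / (2 * \<beta>)" using assms by (simp add: \<sigma>_def power_divide)
  have density: "normal_density 0 \<sigma> x = sqrt (\<beta> / pi) * exp (- \<beta> * x\<^sup>2)" for x
    using assms by (simp add: normal_density_def \<sigma> real_sqrt_divide field_simps)
  have "(\<integral>\<^sup>+x. ennreal (normal_density 0 \<sigma> x) \<partial>lborel) = 1"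
    using integrable_normal_density[of \<sigma> 0] integral_normal_density[of \<sigma> 0] assms
    by (subst nn_integral_eq_integral) (auto simp: \<sigma>_def)
  then have "ennreal (sqrt (\<beta> / pi)) * (\<integral>\<^sup>+x. ennreal (exp (- \<beta> * x\<^sup>2)) \<partial>lborel) = 1"
    using assms by (simp add: density ennreal_mult' nn_integral_cmult)
  then have "ennreal (sqrt (pi / \<beta>)) * ennreal (sqrt (\<beta> / pi)) * (\<integral>\<^sup>+x. ennreal (exp (- \<beta> * x\<^sup>2)) \<partial>lborel)
      = ennreal (sqrt (pi / \<beta>))"
    by (simp add: mult.assoc)
  moreover have "ennreal (sqrt (pi / \<beta>)) * ennreal (sqrt (\<beta> / pi)) = 1"
    using assms by (simp add: ennreal_mult[symmetric] real_sqrt_mult[symmetric])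
  ultimately show ?thesis by simp
qed

lemma nn_integral_gaussian_complex:
  fixes \<beta> :: real
  assumes "0 < \<beta>"
  shows "(\<integral>\<^sup>+z. ennreal (exp (- \<beta> * (cmod z)\<^sup>2)) \<partial>lborel) = ennreal (pi / \<beta>)"
proof -
  have "(\<integral>\<^sup>+z. ennreal (exp (- \<beta> * (cmod z)\<^sup>2)) \<partial>lborel)
      = (\<integral>\<^sup>+x. \<integral>\<^sup>+y. ennreal (exp (- \<beta> * (cmod (Complex x y))\<^sup>2)) \<partial>lborel \<partial>lborel)"
    by (rule nn_integral_lborel_complex) measurable
  also have "\<dots> = (\<integral>\<^sup>+x. \<integral>\<^sup>+y. ennreal (exp (- \<beta> * x\<^sup>2)) * ennreal (exp (- \<beta> * y\<^sup>2)) \<partial>lborel \<partial>lborel)"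
    by (intro nn_integral_cong) (simp add: cmod_power2 ennreal_mult[symmetric] mult_exp_exp algebra_simps)
  also have "\<dots> = ennreal (sqrt (pi / \<beta>)) * ennreal (sqrt (pi / \<beta>))"
    using nn_integral_gaussian[OF assms] by (simp add: nn_integral_cmult nn_integral_multc)
  also have "\<dots> = ennreal (pi / \<beta>)"
    using assms by (simp add: ennreal_mult[symmetric])
  finally show ?thesis .
qed

lemma nn_integral_gauss_weight:
  assumes "0 < \<nu>"
  shows "(\<integral>\<^sup>+z. ennreal (gauss_weight \<nu> z) \<partial>lborel) = ennreal (2 * pi / \<nu>)"
  using nn_integral_gaussian_complex[of "\<nu> / 2"] assms by (simp add: gauss_weight_def)

lemma integrable_exp_quadratic_norm:
  fixes A B C :: real
  assumes "0 < B"
  shows "integrable lborel (\<lambda>z::complex. exp (A * cmod z + C - B * (cmod z)\<^sup>2))"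
proof (rule integrableI_bounded)
  define K where "K = C + A\<^sup>2 / (2 * B)"
  have "A * r + C - B * r\<^sup>2 = K - (B / 2) * r\<^sup>2 - (B / 2) * (r - A / B)\<^sup>2" for r :: real
    using assms by (simp add: K_def power2_eq_square field_simps)
  then have le: "exp (A * r + C - B * r\<^sup>2) \<le> exp K * exp (- (B / 2) * r\<^sup>2)" for r :: real
    using assms by (simp add: mult_exp_exp)
  have "(\<integral>\<^sup>+z. ennreal (norm (exp (A * cmod z + C - B * (cmod z)\<^sup>2))) \<partial>lborel)
      \<le> (\<integral>\<^sup>+z. ennreal (exp K) * ennreal (exp (- (B / 2) * (cmod z)\<^sup>2)) \<partial>lborel)"
    using le by (intro nn_integral_mono) (simp add: ennreal_mult[symmetric] ennreal_leI)
  also have "\<dots> = ennreal (exp K) * ennreal (pi / (B / 2))"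
    using assms nn_integral_gaussian_complex[of "B / 2"] by (simp add: nn_integral_cmult)
  finally show "(\<integral>\<^sup>+z. ennreal (norm (exp (A * cmod z + C - B * (cmod z)\<^sup>2))) \<partial>lborel) < \<infinity>"
    by (simp add: ennreal_mult_less_top order.strict_trans1)
qed simp

section \<open>Sub-mean-value inequalities\<close>

lemma powr_ge_tangent:
  fixes m x \<nu> :: real
  assumes "1 \<le> \<nu>" "0 < m" "0 \<le> x"
  shows "m powr \<nu> + \<nu> * m powr (\<nu> - 1) * (x - m) \<le> x powr \<nu>"
proof (cases "x = 0")
  case True
  have "m powr \<nu> + \<nu> * m powr (\<nu> - 1) * (0 - m) = (1 - \<nu>) * m powr \<nu>"
    using assms by (simp add: powr_diff field_simps)
  also have "\<dots> \<le> 0" using assms by (simp add: mult_nonpos_nonneg)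
  finally show ?thesis using True by simp
next
  case False
  then have "x \<in> {0<..}" using assms by simp
  then have "x powr \<nu> - m powr \<nu> \<ge> \<nu> * m powr (\<nu> - 1) * (x - m)"
    using assms
    by (intro convex_on_imp_above_tangent[OF powr_convex])
       (auto simp: interior_open intro!: has_field_derivative_at_within has_real_derivative_powr)
  then show ?thesis by simp
qed

lemma powr_integral_le_integral_powr:
  fixes h :: "real \<Rightarrow> real"
  assumes "continuous_on {0..1} h" and "\<And>t. t \<in> {0..1} \<Longrightarrow> 0 \<le> h t" and "1 \<le> \<nu>"
  shows "integral {0..1} h powr \<nu> \<le> integral {0..1} (\<lambda>t. h t powr \<nu>)"
proof -
  define m where "m = integral {0..1} h"
  have h_int: "(h has_integral m) {0..1}"
    unfolding m_def using assms(1) by (intro integrable_integral integrable_continuous_interval)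
  have "continuous_on {0..1} (\<lambda>t. h t powr \<nu>)"
    using assms by (intro continuous_on_powr' continuous_on_const) auto
  then have hpow_int: "((\<lambda>t. h t powr \<nu>) has_integral integral {0..1} (\<lambda>t. h t powr \<nu>)) {0..1}"
    by (intro integrable_integral integrable_continuous_interval)
  have "0 \<le> m"
    using h_int assms(2) by (rule has_integral_nonneg) auto
  have "m powr \<nu> \<le> integral {0..1} (\<lambda>t. h t powr \<nu>)"
  proof (cases "m = 0")
    case True
    have "0 \<le> integral {0..1} (\<lambda>t. h t powr \<nu>)"
      using hpow_int by (rule has_integral_nonneg) simp
    with True show ?thesis
      by simp
  next
    case False
    with \<open>0 \<le> m\<close> have "0 < m" by simp
    define K where "K = \<nu> * m powr (\<nu> - 1)"
    have tangent_int: "((\<lambda>t. m powr \<nu> + K * (h t - m)) has_integral m powr \<nu>) {0..1}"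
      using has_integral_add[OF has_integral_const_real[of "m powr \<nu>" 0 1]
          has_integral_mult_right[OF has_integral_diff[OF h_int has_integral_const_real[of m 0 1]], of K]]
      by simp
    have tangent: "m powr \<nu> + K * (h t - m) \<le> h t powr \<nu>" if "t \<in> {0..1}" for t
      unfolding K_def using powr_ge_tangent[OF assms(3) \<open>0 < m\<close> assms(2)[OF that]] .
    show ?thesis
      using tangent_int hpow_int tangent by (rule has_integral_le)
  qed
  then show ?thesis
    by (simp add: m_def)
qed

lemma holomorphic_on_compose_UNIV:
  assumes "f holomorphic_on UNIV" and "g holomorphic_on UNIV"
  shows "(\<lambda>z. g (f z)) holomorphic_on UNIV"
  using holomorphic_on_compose_gen[OF assms] by (simp add: o_def)

lemma continuous_on_circlepath_comp:
  fixes g :: "complex \<Rightarrow> complex"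
  assumes "g holomorphic_on UNIV"
  shows "continuous_on {0..1} (\<lambda>t. g (circlepath 0 1 t))"
proof -
  have "continuous_on UNIV g"
    using assms by (rule holomorphic_on_imp_continuous_on)
  moreover have "continuous_on {0..1} (circlepath 0 1)"
    using path_circlepath unfolding path_def .
  ultimately show ?thesis
    by (rule continuous_on_compose2) simp
qed

lemma norm_le_circle_mean:
  fixes g :: "complex \<Rightarrow> complex"
  assumes "g holomorphic_on UNIV"
  shows "cmod (g 0) \<le> integral {0..1} (\<lambda>t. cmod (g (z * circlepath 0 1 t)))"
proof -
  define G where "G = (\<lambda>w. g (z * w))"
  have "G holomorphic_on UNIV"
    unfolding G_def by (rule holomorphic_on_compose_UNIV[OF _ assms]) (intro holomorphic_intros)
  then have "((\<lambda>w. G w / (w - 0)) has_contour_integral (2 * of_real pi * \<i> * G 0)) (circlepath 0 1)"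
    by (intro Cauchy_integral_circlepath_simple holomorphic_on_subset[OF \<open>G holomorphic_on UNIV\<close>]) simp_all
  then have "((\<lambda>t. G (circlepath 0 1 t) / (circlepath 0 1 t - 0)
      * vector_derivative (circlepath 0 1) (at t within {0..1})) has_integral (2 * of_real pi * \<i> * G 0)) {0..1}"
    by (simp add: has_contour_integral_def)
  moreover have "G (circlepath 0 1 t) / (circlepath 0 1 t - 0)
      * vector_derivative (circlepath 0 1) (at t within {0..1}) = 2 * of_real pi * \<i> * G (circlepath 0 1 t)"
    if "t \<in> {0..1}" for t
    using that by (subst vector_derivative_circlepath01) (auto simp: circlepath)
  ultimately have "((\<lambda>t. 2 * of_real pi * \<i> * G (circlepath 0 1 t)) has_integral (2 * of_real pi * \<i> * G 0)) {0..1}"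
    using has_integral_cong by (metis (no_types, lifting))
  then have mean: "((\<lambda>t. G (circlepath 0 1 t)) has_integral G 0) {0..1}"
    by (subst (asm) has_integral_mult_right_iff) auto
  have "(\<lambda>t. cmod (G (circlepath 0 1 t))) integrable_on {0..1}"
    using continuous_on_circlepath_comp[OF \<open>G holomorphic_on UNIV\<close>]
    by (intro integrable_continuous_interval continuous_on_norm)
  then have "cmod (integral {0..1} (\<lambda>t. G (circlepath 0 1 t))) \<le> integral {0..1} (\<lambda>t. cmod (G (circlepath 0 1 t)))"
    using mean by (intro integral_norm_bound_integral) auto
  then show ?thesis
    using mean by (simp add: integral_unique G_def)
qed

lemma norm_powr_le_circle_mean:
  fixes g :: "complex \<Rightarrow> complex"
  assumes "g holomorphic_on UNIV" and "1 \<le> \<nu>"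
  shows "ennreal (cmod (g 0) powr \<nu>)
     \<le> (\<integral>\<^sup>+t. ennreal (cmod (g (z * circlepath 0 1 t)) powr \<nu>) * indicator {0..1} t \<partial>lborel)"
proof -
  define h where "h = (\<lambda>t. cmod (g (z * circlepath 0 1 t)))"
  have "(\<lambda>w. g (z * w)) holomorphic_on UNIV"
    by (rule holomorphic_on_compose_UNIV[OF _ assms(1)]) (intro holomorphic_intros)
  then have "continuous_on {0..1} h"
    unfolding h_def by (intro continuous_on_norm continuous_on_circlepath_comp)
  then have "continuous_on {0..1} (\<lambda>t. h t powr \<nu>)"
    using assms(2) by (intro continuous_on_powr' continuous_on_const) (auto simp: h_def)
  then have hpow_int: "(\<lambda>t. h t powr \<nu>) integrable_on {0..1}"
    by (rule integrable_continuous_interval)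
  have "cmod (g 0) powr \<nu> \<le> integral {0..1} h powr \<nu>"
    using norm_le_circle_mean[OF assms(1), of z] assms(2) by (intro powr_mono2) (auto simp: h_def)
  also have "\<dots> \<le> integral {0..1} (\<lambda>t. h t powr \<nu>)"
    by (rule powr_integral_le_integral_powr[OF \<open>continuous_on {0..1} h\<close> _ assms(2)]) (simp add: h_def)
  also have "ennreal \<dots> = (\<integral>\<^sup>+t. ennreal (h t powr \<nu>) * indicator {0..1} t \<partial>lborel)"
    by (rule nn_integral_has_integral_lebesgue'[symmetric]) (use hpow_int in auto)
  finally show ?thesis
    by (simp add: h_def ennreal_leI)
qed

lemma borel_measurable_fock_weight [measurable]:
  assumes "f holomorphic_on UNIV"
  shows "fock_weight \<nu> f \<in> borel_measurable borel"
proof -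
  have [measurable]: "f \<in> borel_measurable borel"
    using assms holomorphic_on_imp_continuous_on borel_measurable_continuous_onI by blast
  show ?thesis unfolding fock_weight_def[abs_def] by measurable
qed

lemma borel_measurable_circlepath [measurable]: "circlepath (0::complex) 1 \<in> borel_measurable borel"
  by (rule borel_measurable_continuous_onI) (simp add: circlepath continuous_intros)

lemma norm_powr_le_gaussian_mean:
  fixes g :: "complex \<Rightarrow> complex"
  assumes "g holomorphic_on UNIV" and "1 \<le> \<nu>"
  shows "ennreal (cmod (g 0) powr \<nu>) * (\<integral>\<^sup>+z. ennreal (gauss_weight \<nu> z) \<partial>lborel)
     \<le> (\<integral>\<^sup>+z. ennreal (fock_weight \<nu> g z) \<partial>lborel)"
proof -
  \<comment> \<open>Integrate the circle mean inequality at radius \<open>|z|\<close> against the Gaussian in \<open>z\<close>,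
    swap the integrals and undo each rotation.\<close>
  have [measurable]: "g \<in> borel_measurable borel"
    using assms holomorphic_on_imp_continuous_on borel_measurable_continuous_onI by blast
  define F where "F z t = ennreal (cmod (g (z * circlepath 0 1 t)) powr \<nu>) * indicator {0..1} t
      * ennreal (gauss_weight \<nu> z)" for z t
  have [measurable]: "(\<lambda>(z, t). F z t) \<in> borel_measurable (lborel \<Otimes>\<^sub>M lborel)"
    unfolding F_def by measurable
  have "ennreal (cmod (g 0) powr \<nu>) * (\<integral>\<^sup>+z. ennreal (gauss_weight \<nu> z) \<partial>lborel)
      = (\<integral>\<^sup>+z. ennreal (cmod (g 0) powr \<nu>) * ennreal (gauss_weight \<nu> z) \<partial>lborel)"
    by (rule nn_integral_cmult[symmetric]) measurable
  also have "\<dots> \<le> (\<integral>\<^sup>+z. \<integral>\<^sup>+t. F z t \<partial>lborel \<partial>lborel)"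
    unfolding F_def
    by (intro nn_integral_mono)
      (simp add: nn_integral_multc mult_right_mono norm_powr_le_circle_mean[OF assms])
  also have "\<dots> = (\<integral>\<^sup>+t. \<integral>\<^sup>+z. F z t \<partial>lborel \<partial>lborel)"
    by (rule lborel_pair.Fubini') measurable
  also have "\<dots> = (\<integral>\<^sup>+t. indicator {0..1::real} t * (\<integral>\<^sup>+z. ennreal (fock_weight \<nu> g z) \<partial>lborel) \<partial>lborel)"
  proof (rule nn_integral_cong)
    fix t :: real
    have "cmod (circlepath 0 1 t) = 1" by (simp add: circlepath norm_mult)
    have "(\<integral>\<^sup>+z. F z t \<partial>lborel)
        = indicator {0..1} t * (\<integral>\<^sup>+z. ennreal (fock_weight \<nu> g (circlepath 0 1 t * z)) \<partial>lborel)"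
      using \<open>cmod (circlepath 0 1 t) = 1\<close>
      by (simp add: F_def fock_weight_eq gauss_weight_def norm_mult ennreal_mult' mult_ac
          flip: nn_integral_cmult)
    also have "\<dots> = indicator {0..1} t * (\<integral>\<^sup>+z. ennreal (fock_weight \<nu> g z) \<partial>lborel)"
      using \<open>cmod (circlepath 0 1 t) = 1\<close> assms(1)
      by (subst nn_integral_lborel_mult_unit[where F = "\<lambda>z. ennreal (fock_weight \<nu> g z)"]) auto
    finally show "(\<integral>\<^sup>+z. F z t \<partial>lborel)
        = indicator {0..1} t * (\<integral>\<^sup>+z. ennreal (fock_weight \<nu> g z) \<partial>lborel)" .
  qed
  also have "\<dots> = (\<integral>\<^sup>+z. ennreal (fock_weight \<nu> g z) \<partial>lborel)"
    by (simp add: nn_integral_multc)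
  finally show ?thesis .
qed

lemma fock_weight_le_nn_integral:
  fixes f :: "complex \<Rightarrow> complex"
  assumes "f holomorphic_on UNIV" and "1 \<le> \<nu>"
  shows "ennreal (fock_weight \<nu> f u) * (\<integral>\<^sup>+z. ennreal (gauss_weight \<nu> z) \<partial>lborel)
     \<le> (\<integral>\<^sup>+z. ennreal (fock_weight \<nu> f z) \<partial>lborel)"
proof -
  \<comment> \<open>The translate \<open>g\<close> moves \<open>u\<close> to \<open>0\<close>; the factor \<open>exp (- cnj u * z)\<close> makes its
    Fock integrand a translate of that of \<open>f\<close>.\<close>
  define g where "g z = f (u + z) * exp (- cnj u * z)" for z
  have "(\<lambda>z. f (u + z)) holomorphic_on UNIV"
    by (rule holomorphic_on_compose_UNIV[OF _ assms(1)]) (intro holomorphic_intros)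
  then have "g holomorphic_on UNIV"
    unfolding g_def[abs_def] by (auto intro!: holomorphic_intros)
  have shift: "fock_weight \<nu> g z = fock_weight \<nu> f (u + z) * exp (\<nu> * (cmod u)\<^sup>2 / 2)" for z
  proof -
    have "(cmod (u + z))\<^sup>2 = (cmod z)\<^sup>2 + 2 * Re (cnj u * z) + (cmod u)\<^sup>2"
      by (simp only: cmod_power2) (simp add: power2_eq_square algebra_simps)
    then have "Re (- cnj u * z) * \<nu> - \<nu> * (cmod z)\<^sup>2 / 2 = - \<nu> * (cmod (u + z))\<^sup>2 / 2 + \<nu> * (cmod u)\<^sup>2 / 2"
      by (simp add: field_simps)
    then show ?thesis
      by (simp add: fock_weight_def g_def norm_mult powr_mult exp_powr_real mult_exp_exp mult_ac)
  qed
  have [measurable]: "fock_weight \<nu> f \<in> borel_measurable borel"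
    using assms(1) by measurable
  have "ennreal (fock_weight \<nu> f u) * (\<integral>\<^sup>+z. ennreal (gauss_weight \<nu> z) \<partial>lborel)
      = ennreal (gauss_weight \<nu> u) * (ennreal (cmod (g 0) powr \<nu>) * (\<integral>\<^sup>+z. ennreal (gauss_weight \<nu> z) \<partial>lborel))"
    by (simp add: fock_weight_eq g_def ennreal_mult'' mult_ac)
  also have "\<dots> \<le> ennreal (gauss_weight \<nu> u) * (\<integral>\<^sup>+z. ennreal (fock_weight \<nu> g z) \<partial>lborel)"
    using norm_powr_le_gaussian_mean[OF \<open>g holomorphic_on UNIV\<close> assms(2)] by (rule mult_left_mono) simp
  also have "(\<integral>\<^sup>+z. ennreal (fock_weight \<nu> g z) \<partial>lborel)
      = (\<integral>\<^sup>+z. ennreal (exp (\<nu> * (cmod u)\<^sup>2 / 2)) * ennreal (fock_weight \<nu> f (u + z)) \<partial>lborel)"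
    by (intro nn_integral_cong) (simp add: shift ennreal_mult'' mult.commute)
  also have "\<dots> = ennreal (exp (\<nu> * (cmod u)\<^sup>2 / 2)) * (\<integral>\<^sup>+z. ennreal (fock_weight \<nu> f (u + z)) \<partial>lborel)"
    by (rule nn_integral_cmult) measurable
  also have "(\<integral>\<^sup>+z. ennreal (fock_weight \<nu> f (u + z)) \<partial>lborel) = (\<integral>\<^sup>+z. ennreal (fock_weight \<nu> f z) \<partial>lborel)"
    by (subst lborel_distr_plus[symmetric, of u]) (simp add: nn_integral_distr)
  also have "ennreal (gauss_weight \<nu> u) * (ennreal (exp (\<nu> * (cmod u)\<^sup>2 / 2)) * (\<integral>\<^sup>+z. ennreal (fock_weight \<nu> f z) \<partial>lborel))
      = ennreal (gauss_weight \<nu> u * exp (\<nu> * (cmod u)\<^sup>2 / 2)) * (\<integral>\<^sup>+z. ennreal (fock_weight \<nu> f z) \<partial>lborel)"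
    by (simp add: gauss_weight_def ennreal_mult' mult.assoc)
  also have "gauss_weight \<nu> u * exp (\<nu> * (cmod u)\<^sup>2 / 2) = 1"
    by (simp add: gauss_weight_def mult_exp_exp)
  finally show ?thesis by simp
qed

section \<open>Pointwise and dominated bounds in Fock space\<close>

lemma fock_norm_nonneg: "0 \<le> fock_norm \<nu> f"
  by (simp add: fock_norm_def)

lemma norm_le_fock_norm:
  assumes "in_fock \<nu> f" and "1 \<le> \<nu>"
  shows "cmod (f u) \<le> exp ((cmod u)\<^sup>2 / 2) * fock_norm \<nu> f"
proof -
  have hol: "f holomorphic_on UNIV" and int: "integrable lborel (fock_weight \<nu> f)"
    using assms(1) by (auto simp: in_fock_def)
  define X where "X = cmod (f u) * exp (- (cmod u)\<^sup>2 / 2)"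
  have "X \<ge> 0" by (simp add: X_def)
  have "X powr \<nu> = fock_weight \<nu> f u"
    by (simp add: X_def fock_weight_def powr_mult exp_powr_real mult_ac)
  have "ennreal (fock_weight \<nu> f u * (2 * pi / \<nu>)) = ennreal (fock_weight \<nu> f u) * ennreal (2 * pi / \<nu>)"
    by (rule ennreal_mult'[OF fock_weight_nonneg])
  also have "\<dots> \<le> ennreal (integral\<^sup>L lborel (fock_weight \<nu> f))"
    using fock_weight_le_nn_integral[OF hol assms(2), of u] assms(2)
      nn_integral_eq_integral[OF int AE_I2[OF fock_weight_nonneg]]
    by (simp add: nn_integral_gauss_weight)
  finally have "ennreal (fock_weight \<nu> f u * (2 * pi / \<nu>)) \<le> ennreal (integral\<^sup>L lborel (fock_weight \<nu> f))" .
  moreover have "0 \<le> integral\<^sup>L lborel (fock_weight \<nu> f)"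
    by (simp add: fock_weight_nonneg)
  ultimately have "fock_weight \<nu> f u * (2 * pi / \<nu>) \<le> integral\<^sup>L lborel (fock_weight \<nu> f)"
    by simp
  then have "X powr \<nu> \<le> \<nu> / (2 * pi) * integral\<^sup>L lborel (fock_weight \<nu> f)"
    using assms(2) by (simp add: \<open>X powr \<nu> = fock_weight \<nu> f u\<close> field_simps)
  then have "(X powr \<nu>) powr (1 / \<nu>) \<le> fock_norm \<nu> f"
    unfolding fock_norm_def using assms(2) by (intro powr_mono2) auto
  then have "X \<le> fock_norm \<nu> f"
    using \<open>X \<ge> 0\<close> assms(2) by (simp add: powr_powr)
  have "cmod (f u) = exp ((cmod u)\<^sup>2 / 2) * X"
    by (simp add: X_def mult.left_commute flip: exp_add)
  also have "\<dots> \<le> exp ((cmod u)\<^sup>2 / 2) * fock_norm \<nu> f"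
    using \<open>X \<le> fock_norm \<nu> f\<close> by simp
  finally show ?thesis .
qed

lemma fock_norm_pos:
  assumes "in_fock \<nu> f" and "1 \<le> \<nu>" and "f u \<noteq> 0"
  shows "0 < fock_norm \<nu> f"
proof -
  have "0 < exp ((cmod u)\<^sup>2 / 2) * fock_norm \<nu> f"
    using norm_le_fock_norm[OF assms(1,2), of u] assms(3) by (meson less_le_trans zero_less_norm_iff)
  then show ?thesis
    by (simp add: zero_less_mult_iff)
qed

lemma
  fixes g :: "complex \<Rightarrow> complex" and D :: "complex \<Rightarrow> real"
  assumes "g holomorphic_on UNIV" and "0 < \<nu>" and "integrable lborel D" and "\<And>z. 0 \<le> D z"
    and "0 \<le> N" and "\<And>z. fock_weight \<nu> g z \<le> N powr \<nu> * D z"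
  shows in_fock_dominated: "in_fock \<nu> g"
    and fock_norm_le_dominated: "fock_norm \<nu> g \<le> (\<nu> / (2 * pi) * integral\<^sup>L lborel D) powr (1 / \<nu>) * N"
proof -
  have int_ND: "integrable lborel (\<lambda>z. N powr \<nu> * D z)"
    using assms(3) by simp
  have int: "integrable lborel (fock_weight \<nu> g)"
  proof (rule Bochner_Integration.integrable_bound[OF int_ND])
    show "fock_weight \<nu> g \<in> borel_measurable lborel"
      using assms(1) by simp
    show "AE z in lborel. norm (fock_weight \<nu> g z) \<le> norm (N powr \<nu> * D z)"
      using assms(4,6) by (intro AE_I2) (simp add: fock_weight_nonneg)
  qed
  then show "in_fock \<nu> g"
    using assms(1) by (simp add: in_fock_def)
  have "0 \<le> integral\<^sup>L lborel D"
    using assms(4) by (simp add: Bochner_Integration.integral_nonneg)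
  have "integral\<^sup>L lborel (fock_weight \<nu> g) \<le> N powr \<nu> * integral\<^sup>L lborel D"
    using integral_mono[OF int int_ND assms(6)] by simp
  then have "fock_norm \<nu> g \<le> (\<nu> / (2 * pi) * (N powr \<nu> * integral\<^sup>L lborel D)) powr (1 / \<nu>)"
    unfolding fock_norm_def using assms(2)
    by (intro powr_mono2 mult_left_mono) (simp_all add: fock_weight_nonneg)
  also have "\<dots> = (\<nu> / (2 * pi) * integral\<^sup>L lborel D) powr (1 / \<nu>) * (N powr \<nu>) powr (1 / \<nu>)"
    using assms(2) \<open>0 \<le> integral\<^sup>L lborel D\<close> by (simp add: mult_ac flip: powr_mult)
  also have "(N powr \<nu>) powr (1 / \<nu>) = N"
    using assms(2,5) by (simp add: powr_powr)
  finally show "fock_norm \<nu> g \<le> (\<nu> / (2 * pi) * integral\<^sup>L lborel D) powr (1 / \<nu>) * N" .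
qed

lemma fock_norm_mult:
  assumes "0 < \<nu>"
  shows "fock_norm \<nu> (\<lambda>z. c * f z) = cmod c * fock_norm \<nu> f"
proof -
  have "fock_weight \<nu> (\<lambda>z. c * f z) = (\<lambda>z. cmod c powr \<nu> * fock_weight \<nu> f z)"
    by (simp add: fock_weight_def norm_mult powr_mult fun_eq_iff)
  then have "fock_norm \<nu> (\<lambda>z. c * f z) = (cmod c powr \<nu>) powr (1 / \<nu>) * fock_norm \<nu> f"
    by (simp add: fock_norm_def powr_mult[symmetric] mult_ac)
  also have "(cmod c powr \<nu>) powr (1 / \<nu>) = cmod c"
    using assms by (simp add: powr_powr)
  finally show ?thesis .
qed

section \<open>Weighted composition operators\<close>

lemma funpow_wcomp_eigenfunction:
  assumes "wcomp w \<phi> f = (\<lambda>z. c * f z)"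
  shows "(wcomp w \<phi> ^^ n) f = (\<lambda>z. c ^ n * f z)"
proof (induction n)
  case (Suc n)
  have "(wcomp w \<phi> ^^ Suc n) f = (\<lambda>z. c ^ n * wcomp w \<phi> f z)"
    by (simp add: Suc.IH wcomp_def mult.left_commute)
  then show ?case
    by (simp add: assms mult_ac)
qed simp

lemma not_power_bounded_if_eigenvalue_gt_1:
  assumes "in_fock \<nu> f" and "f u \<noteq> 0" and "1 \<le> \<nu>"
    and "wcomp w \<phi> f = (\<lambda>z. c * f z)" and "1 < cmod c"
  shows "\<not> power_bounded \<nu> (wcomp w \<phi>)"
proof
  assume "power_bounded \<nu> (wcomp w \<phi>)"
  then obtain C where C: "\<And>n. 1 \<le> n \<Longrightarrow> fock_norm \<nu> ((wcomp w \<phi> ^^ n) f) \<le> C * fock_norm \<nu> f"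
    using assms(1) unfolding power_bounded_def by blast
  have "0 < fock_norm \<nu> f"
    using assms(1,3,2) by (rule fock_norm_pos)
  have bounded: "cmod c ^ n \<le> C" if "1 \<le> n" for n
  proof -
    have "cmod c ^ n * fock_norm \<nu> f \<le> C * fock_norm \<nu> f"
      using C[OF that] assms(3)
      by (simp only: funpow_wcomp_eigenfunction[OF assms(4)]) (simp add: fock_norm_mult norm_power)
    then show ?thesis
      using \<open>0 < fock_norm \<nu> f\<close> by simp
  qed
  obtain n where "C < cmod c ^ n"
    using real_arch_pow[OF assms(5)] by blast
  also have "\<dots> \<le> cmod c ^ Suc n"
    using assms(5) by (intro power_increasing) auto
  finally show False
    using bounded[of "Suc n"] by simp
qed

lemma in_fock_exp_linear:
  assumes "1 \<le> \<nu>"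
  shows "in_fock \<nu> (\<lambda>z. exp (c * z))"
proof (rule in_fock_dominated[where N = 1])
  show "integrable lborel (\<lambda>z. exp (\<nu> * cmod c * cmod z + 0 - \<nu> / 2 * (cmod z)\<^sup>2))"
    using assms by (intro integrable_exp_quadratic_norm) simp
  show "fock_weight \<nu> (\<lambda>z. exp (c * z)) z \<le> 1 powr \<nu> * exp (\<nu> * cmod c * cmod z + 0 - \<nu> / 2 * (cmod z)\<^sup>2)"
    for z
  proof -
    have "Re (c * z) * \<nu> \<le> cmod c * cmod z * \<nu>"
      using assms complex_Re_le_cmod[of "c * z"] by (intro mult_right_mono) (auto simp: norm_mult)
    then show ?thesis
      by (simp add: fock_weight_def exp_powr_real mult_exp_exp algebra_simps)
  qed
qed (use assms in \<open>auto intro!: holomorphic_intros\<close>)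

lemma wcomp_exp_affine_eigenfunction:
  fixes a b p q :: complex
  assumes "a \<noteq> 1"
  shows "wcomp (\<lambda>z. exp (p + q * z)) (\<lambda>z. a * z + b) (\<lambda>z. exp (q / (1 - a) * z))
    = (\<lambda>z. exp (p + q * b / (1 - a)) * exp (q / (1 - a) * z))"
proof
  fix z
  define c where "c = q / (1 - a)"
  have c: "c * (1 - a) = q" using assms by (simp add: c_def)
  have "p + q * z + c * (a * z + b) = p + c * b + c * z"
    by (subst c[symmetric]) (simp add: algebra_simps)
  then show "wcomp (\<lambda>z. exp (p + q * z)) (\<lambda>z. a * z + b) (\<lambda>z. exp (q / (1 - a) * z)) z
      = exp (p + q * b / (1 - a)) * exp (q / (1 - a) * z)"
    by (simp add: wcomp_def c_def add.assoc flip: exp_add)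
qed

lemma not_power_bounded_wcomp_exp_affine:
  fixes a b p q :: complex
  assumes "1 \<le> \<nu>" and "a \<noteq> 1" and "Re p + Re (q * b / (1 - a)) > 0"
  shows "\<not> power_bounded \<nu> (wcomp (\<lambda>z. exp (p + q * z)) (\<lambda>z. a * z + b))"
proof (rule not_power_bounded_if_eigenvalue_gt_1)
  show "wcomp (\<lambda>z. exp (p + q * z)) (\<lambda>z. a * z + b) (\<lambda>z. exp (q / (1 - a) * z))
    = (\<lambda>z. exp (p + q * b / (1 - a)) * exp (q / (1 - a) * z))"
    using assms(2) by (rule wcomp_exp_affine_eigenfunction)
  show "1 < cmod (exp (p + q * b / (1 - a)))"
    using assms(3) by simp
  show "in_fock \<nu> (\<lambda>z. exp (q / (1 - a) * z))"
    using assms(1) by (rule in_fock_exp_linear)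
qed (use assms(1) in auto)

lemma holomorphic_on_funpow_wcomp:
  assumes "w holomorphic_on UNIV" and "\<phi> holomorphic_on UNIV" and "f holomorphic_on UNIV"
  shows "(wcomp w \<phi> ^^ n) f holomorphic_on UNIV"
proof (induction n)
  case (Suc n)
  have "wcomp w \<phi> g holomorphic_on UNIV" if "g holomorphic_on UNIV" for g
    using assms(1) holomorphic_on_compose_UNIV[OF assms(2) that]
    unfolding wcomp_def by (auto intro!: holomorphic_intros)
  then show ?case
    using Suc.IH by simp
qed (simp add: assms(3))

lemma funpow_wcomp_exp_affine:
  fixes a b p q :: complex
  assumes "a \<noteq> 1"
  defines "z0 \<equiv> b / (1 - a)"
  shows "(wcomp (\<lambda>z. exp (p + q * z)) (\<lambda>z. a * z + b) ^^ n) f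
     = (\<lambda>z. exp (p + q * z0) ^ n * exp (q * (z - z0) * (\<Sum>k<n. a ^ k)) * f (z0 + a ^ n * (z - z0)))"
proof (induction n)
  case (Suc n)
  have affine: "a * z + b - z0 = a * (z - z0)" for z
    using assms(1) by (simp add: z0_def field_simps)
  have geometric: "(\<Sum>k<Suc n. a ^ k) = 1 + a * (\<Sum>k<n. a ^ k)"
    by (simp add: sum.lessThan_Suc_shift sum_distrib_left del: sum.lessThan_Suc)
  show ?case
  proof
    fix z
    have "(wcomp (\<lambda>z. exp (p + q * z)) (\<lambda>z. a * z + b) ^^ Suc n) f z
        = exp (p + q * z) * (exp (p + q * z0) ^ n * exp (q * (a * (z - z0)) * (\<Sum>k<n. a ^ k))
          * f (z0 + a ^ Suc n * (z - z0)))"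
      by (simp add: Suc.IH wcomp_def affine mult.assoc mult.left_commute[of "a ^ n" a])
    moreover have "exp (p + q * z) = exp (p + q * z0) * exp (q * (z - z0))"
      by (simp add: algebra_simps flip: exp_add)
    moreover have "exp (q * (z - z0)) * exp (q * (a * (z - z0)) * (\<Sum>k<n. a ^ k))
        = exp (q * (z - z0) * (\<Sum>k<Suc n. a ^ k))"
      unfolding geometric by (simp add: algebra_simps flip: exp_add)
    ultimately show "(wcomp (\<lambda>z. exp (p + q * z)) (\<lambda>z. a * z + b) ^^ Suc n) f z
        = exp (p + q * z0) ^ Suc n * exp (q * (z - z0) * (\<Sum>k<Suc n. a ^ k)) * f (z0 + a ^ Suc n * (z - z0))"
      by (simp add: mult_ac)
  qed
qed simp

lemma norm_sum_powers_le:
  fixes a :: complex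
  assumes "cmod a < 1"
  shows "cmod (\<Sum>k<n. a ^ k) \<le> 1 / (1 - cmod a)"
proof -
  have "cmod (\<Sum>k<n. a ^ k) \<le> (\<Sum>k<n. cmod a ^ k)"
    by (rule order_trans[OF norm_sum]) (simp add: norm_power)
  also have "\<dots> = (1 - cmod a ^ n) / (1 - cmod a)"
    using assms by (simp add: sum_gp_strict)
  also have "\<dots> \<le> 1 / (1 - cmod a)"
    using assms by (intro divide_right_mono) auto
  finally show ?thesis .
qed

lemma funpow_wcomp_exp_affine_exponent_le:
  fixes a q z0 :: complex
  assumes "cmod a < 1"
  obtains A C where "\<And>n z. 1 \<le> n \<Longrightarrow>
      Re (q * (z - z0) * (\<Sum>k<n. a ^ k)) + (cmod (z0 + a ^ n * (z - z0)))\<^sup>2 / 2 - (cmod z)\<^sup>2 / 2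
      \<le> A * cmod z + C - (1 - (cmod a)\<^sup>2) / 2 * (cmod z)\<^sup>2"
proof
  fix n :: nat and z :: complex
  assume "1 \<le> n"
  define S where "S = 1 / (1 - cmod a)"
  have dist: "cmod (z - z0) \<le> cmod z + cmod z0"
    by (rule norm_triangle_ineq4)
  have "Re (q * (z - z0) * (\<Sum>k<n. a ^ k)) \<le> cmod q * cmod (z - z0) * cmod (\<Sum>k<n. a ^ k)"
    using complex_Re_le_cmod[of "q * (z - z0) * (\<Sum>k<n. a ^ k)"] by (simp only: norm_mult)
  also have "\<dots> \<le> cmod q * (cmod z + cmod z0) * S"
    using norm_sum_powers_le[OF assms, of n] dist unfolding S_def
    by (intro mult_mono mult_left_mono) auto
  finally have linear: "Re (q * (z - z0) * (\<Sum>k<n. a ^ k)) \<le> cmod q * (cmod z + cmod z0) * S" .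
  have "cmod a ^ n \<le> cmod a"
    using power_decreasing[OF \<open>1 \<le> n\<close>, of "cmod a"] assms by simp
  have "cmod (z0 + a ^ n * (z - z0)) \<le> cmod z0 + cmod a ^ n * cmod (z - z0)"
    by (metis norm_mult norm_power norm_triangle_ineq)
  also have "\<dots> \<le> cmod z0 + cmod a * (cmod z + cmod z0)"
    using \<open>cmod a ^ n \<le> cmod a\<close> dist by (intro add_left_mono mult_mono) auto
  also have "\<dots> \<le> 2 * cmod z0 + cmod a * cmod z"
    using assms by (simp add: algebra_simps mult_left_le_one_le)
  finally have "(cmod (z0 + a ^ n * (z - z0)))\<^sup>2 \<le> (2 * cmod z0 + cmod a * cmod z)\<^sup>2"
    by (intro power_mono) auto
  with linear have "Re (q * (z - z0) * (\<Sum>k<n. a ^ k)) + (cmod (z0 + a ^ n * (z - z0)))\<^sup>2 / 2 - (cmod z)\<^sup>2 / 2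
      \<le> cmod q * (cmod z + cmod z0) * S + (2 * cmod z0 + cmod a * cmod z)\<^sup>2 / 2 - (cmod z)\<^sup>2 / 2"
    by linarith
  also have "\<dots> = (cmod q * S + 2 * cmod z0 * cmod a) * cmod z + (cmod q * S * cmod z0 + 2 * (cmod z0)\<^sup>2)
      - (1 - (cmod a)\<^sup>2) / 2 * (cmod z)\<^sup>2"
    by (simp add: power2_eq_square field_simps)
  finally show "Re (q * (z - z0) * (\<Sum>k<n. a ^ k)) + (cmod (z0 + a ^ n * (z - z0)))\<^sup>2 / 2 - (cmod z)\<^sup>2 / 2
      \<le> (cmod q * S + 2 * cmod z0 * cmod a) * cmod z + (cmod q * S * cmod z0 + 2 * (cmod z0)\<^sup>2)
        - (1 - (cmod a)\<^sup>2) / 2 * (cmod z)\<^sup>2" .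
qed

lemma fock_weight_funpow_wcomp_exp_affine_le:
  fixes a b p q :: complex
  assumes "1 \<le> \<nu>" and "a \<noteq> 1" and "Re p + Re (q * b / (1 - a)) \<le> 0" and "in_fock \<nu> f"
  defines "z0 \<equiv> b / (1 - a)"
  shows "fock_weight \<nu> ((wcomp (\<lambda>z. exp (p + q * z)) (\<lambda>z. a * z + b) ^^ n) f) z
    \<le> fock_norm \<nu> f powr \<nu> * exp (\<nu> * (Re (q * (z - z0) * (\<Sum>k<n. a ^ k))
        + (cmod (z0 + a ^ n * (z - z0)))\<^sup>2 / 2 - (cmod z)\<^sup>2 / 2))"
proof -
  define \<Phi> where "\<Phi> = z0 + a ^ n * (z - z0)"
  define x where "x = Re (q * (z - z0) * (\<Sum>k<n. a ^ k))"
  have "cmod (exp (p + q * z0)) \<le> 1"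
    using assms(3) by (simp add: z0_def)
  have "fock_weight \<nu> ((wcomp (\<lambda>z. exp (p + q * z)) (\<lambda>z. a * z + b) ^^ n) f) z
      = (cmod (exp (p + q * z0)) ^ n * (exp x * cmod (f \<Phi>))) powr \<nu> * gauss_weight \<nu> z"
    using assms(2)
    by (simp add: funpow_wcomp_exp_affine fock_weight_eq norm_mult norm_power x_def \<Phi>_def z0_def mult.assoc)
  also have "\<dots> \<le> (exp x * cmod (f \<Phi>)) powr \<nu> * gauss_weight \<nu> z"
    using \<open>cmod (exp (p + q * z0)) \<le> 1\<close> assms(1)
    by (intro mult_right_mono powr_mono2 mult_left_le_one_le) (auto simp: gauss_weight_def power_le_one)
  also have "\<dots> \<le> (exp x * (exp ((cmod \<Phi>)\<^sup>2 / 2) * fock_norm \<nu> f)) powr \<nu> * gauss_weight \<nu> z"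
    using norm_le_fock_norm[OF assms(4,1), of \<Phi>] assms(1)
    by (intro mult_right_mono powr_mono2 mult_left_mono) (auto simp: gauss_weight_def)
  also have "\<dots> = fock_norm \<nu> f powr \<nu> * exp (\<nu> * (x + (cmod \<Phi>)\<^sup>2 / 2 - (cmod z)\<^sup>2 / 2))"
    using fock_norm_nonneg[of \<nu> f]
    by (simp add: powr_mult exp_powr_real gauss_weight_def mult_exp_exp algebra_simps)
  finally show ?thesis
    by (simp add: x_def \<Phi>_def)
qed

lemma power_bounded_if_dominated:
  assumes "0 < \<nu>" and "integrable lborel D" and "\<And>z. 0 \<le> D z"
    and "\<And>n f. in_fock \<nu> f \<Longrightarrow> (T ^^ n) f holomorphic_on UNIV"
    and "\<And>n f z. 1 \<le> n \<Longrightarrow> in_fock \<nu> f \<Longrightarrow> fock_weight \<nu> ((T ^^ n) f) z \<le> fock_norm \<nu> f powr \<nu> * D z"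
  shows "power_bounded \<nu> T"
proof -
  have "in_fock \<nu> ((T ^^ n) f)
      \<and> fock_norm \<nu> ((T ^^ n) f) \<le> (\<nu> / (2 * pi) * integral\<^sup>L lborel D) powr (1 / \<nu>) * fock_norm \<nu> f"
    if "1 \<le> n" and "in_fock \<nu> f" for n f
    using assms(4)[OF that(2)] assms(1-3) fock_norm_nonneg assms(5)[OF that]
    by (blast intro: in_fock_dominated fock_norm_le_dominated)
  then show ?thesis
    unfolding power_bounded_def by blast
qed

lemma power_bounded_wcomp_exp_affine:
  fixes a b p q :: complex
  assumes "1 \<le> \<nu>" and "cmod a < 1" and "Re p + Re (q * b / (1 - a)) \<le> 0"
  shows "power_bounded \<nu> (wcomp (\<lambda>z. exp (p + q * z)) (\<lambda>z. a * z + b))"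
proof -
  define z0 where "z0 = b / (1 - a)"
  define B where "B = (1 - (cmod a)\<^sup>2) / 2"
  have "a \<noteq> 1" using assms(2) by auto
  have "0 < B" using assms(2) by (simp add: B_def power_less_one_iff abs_square_less_1)
  obtain A C where exponent: "\<And>n z. 1 \<le> n \<Longrightarrow>
      Re (q * (z - z0) * (\<Sum>k<n. a ^ k)) + (cmod (z0 + a ^ n * (z - z0)))\<^sup>2 / 2 - (cmod z)\<^sup>2 / 2
      \<le> A * cmod z + C - B * (cmod z)\<^sup>2"
    using funpow_wcomp_exp_affine_exponent_le[OF assms(2)] unfolding B_def by blast
  define D where "D z = exp (\<nu> * A * cmod z + \<nu> * C - \<nu> * B * (cmod z)\<^sup>2)" for z :: complex
  show ?thesis
  proof (rule power_bounded_if_dominated[where D = D])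
    show "0 < \<nu>"
      using assms(1) by simp
    show "integrable lborel D"
      unfolding D_def[abs_def] using \<open>0 < B\<close> assms(1) by (intro integrable_exp_quadratic_norm) simp
    show "0 \<le> D z" for z
      by (simp add: D_def)
    show "(wcomp (\<lambda>z. exp (p + q * z)) (\<lambda>z. a * z + b) ^^ n) f holomorphic_on UNIV"
      if "in_fock \<nu> f" for n f
      using that unfolding in_fock_def by (intro holomorphic_on_funpow_wcomp holomorphic_intros) auto
    show "fock_weight \<nu> ((wcomp (\<lambda>z. exp (p + q * z)) (\<lambda>z. a * z + b) ^^ n) f) z
        \<le> fock_norm \<nu> f powr \<nu> * D z"
      if "1 \<le> n" and "in_fock \<nu> f" for n f z
    proof -
      have "\<nu> * (Re (q * (z - z0) * (\<Sum>k<n. a ^ k)) + (cmod (z0 + a ^ n * (z - z0)))\<^sup>2 / 2 - (cmod z)\<^sup>2 / 2)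
          \<le> \<nu> * A * cmod z + \<nu> * C - \<nu> * B * (cmod z)\<^sup>2"
        using mult_left_mono[OF exponent[OF \<open>1 \<le> n\<close>, of z], of \<nu>] assms(1)
        by (simp add: algebra_simps)
      then show ?thesis
        using fock_weight_funpow_wcomp_exp_affine_le[OF assms(1) \<open>a \<noteq> 1\<close> assms(3) \<open>in_fock \<nu> f\<close>, of n z]
        unfolding D_def z0_def[symmetric]
        by (elim order_trans) (simp add: mult_left_mono)
    qed
  qed
qed

theorem theorem3p3:
  fixes \<nu> :: real and a b p q :: complex
  assumes "1 \<le> \<nu>" and "0 < cmod a" and "cmod a < 1"
  shows "(Re p + Re (q * b / (1 - a)) > 0 \<longrightarrow>
            \<not> power_bounded \<nu> (wcomp (\<lambda>z. exp (p + q * z)) (\<lambda>z. a * z + b)))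
       \<and> (Re p + Re (q * b / (1 - a)) - ln (cmod a) < 0 \<longrightarrow>
            power_bounded \<nu> (wcomp (\<lambda>z. exp (p + q * z)) (\<lambda>z. a * z + b)))"
proof (intro conjI impI)
  assume "Re p + Re (q * b / (1 - a)) > 0"
  moreover have "a \<noteq> 1" using assms(3) by auto
  ultimately show "\<not> power_bounded \<nu> (wcomp (\<lambda>z. exp (p + q * z)) (\<lambda>z. a * z + b))"
    using assms(1) by (intro not_power_bounded_wcomp_exp_affine)
next
  assume "Re p + Re (q * b / (1 - a)) - ln (cmod a) < 0"
  moreover have "ln (cmod a) < 0" using assms(2,3) by simp
  ultimately show "power_bounded \<nu> (wcomp (\<lambda>z. exp (p + q * z)) (\<lambda>z. a * z + b))"
    using assms(1,3) by (intro power_bounded_wcomp_exp_affine) simp_all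
qed

end
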